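(* For every $m\ge1$ and $n\ge1$ there is an injective map from $Q_5(m,n)$ to $P_5(-m,n)$.
   Context: Partitions: $\lambda_1\ge\cdots\ge\lambda_\ell>0$, $\ell(\lambda)=\ell$, $\lambda_i=0$ for $i>\ell$, $s(\lambda)$ the smallest part with $s(\emptyset)=+\infty$. Rank $=\lambda_1-\ell$; rank-set $=[-\lambda_1,1-\lambda_2,\dots,\ell-1-\lambda_\ell,\ell,\ell+1,\dots]$. $Q(m,n)$: partitions of $n$ whose rank-set contains $m$; $P(-m,n)$: partitions of $n$ with rank $\ge-m$. $m$-Durfee rectangle symbol $(\alpha,\beta)_{(m+j)\times j}$ of $\lambda$: $j\ge0$ is the largest integer with $\lambda_{m+j}\ge j$; $\alpha$ is the conjugate of $(\lambda_1-j,\dots,\lambda_{m+j}-j)$ and $\beta=(\lambda_{m+j+1},\lambda_{m+j+2},\dots)$; $|\lambda|=|\alpha|+|\beta|+j(m+j)$. $Q_5(m,n)$ is the set of $\lambda\in Q(m,n)$ whose symbol has $j\ge1$, $\ell(\beta)-\ell(\alpha)\ge1$, $\alpha_1=\alpha_2=m+j>\alpha_3$ and $s(\beta)\ge2$. $P_5(-m,n)$ is the set of $\mu\in P(-m,n)$ whose symbol $(\gamma,\delta)_{(m+j')\times j'}$ has $j'\ge1$, $\ell(\gamma)=\ell(\delta)$, $\gamma_1\le m+j'-3$ and $\delta_1=j'$. *)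

theory Defs
  imports Main "HOL-Library.Extended_Nat"
begin

definition is_partition :: "nat list \<Rightarrow> bool" where
  "is_partition lam \<longleftrightarrow> sorted_wrt (\<ge>) lam \<and> (\<forall>x\<in>set lam. 0 < x)"

definition partitions :: "nat \<Rightarrow> nat list set" where
  "partitions n = {lam. is_partition lam \<and> sum_list lam = n}"

text \<open>The i-th part (1-indexed), zero beyond the length.\<close>
definition part :: "nat list \<Rightarrow> nat \<Rightarrow> nat" where
  "part lam i = (if 1 \<le> i \<and> i \<le> length lam then lam ! (i - 1) else 0)"

definition spart :: "nat list \<Rightarrow> enat" where
  "spart lam = (if lam = [] then \<infinity> else enat (Min (set lam)))"

definition rank :: "nat list \<Rightarrow> int" where
  "rank lam = int (part lam 1) - int (length lam)"

text \<open>Membership in the rank-set [-lam1, 1-lam2, ..., l-1-lam_l, l, l+1, ...]: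
  the k-th entry (k \<ge> 1) is k - 1 - lam_k.\<close>
definition in_rankset :: "int \<Rightarrow> nat list \<Rightarrow> bool" where
  "in_rankset x lam \<longleftrightarrow> (\<exists>k\<ge>1. int k - 1 - int (part lam k) = x)"

definition Qset :: "int \<Rightarrow> nat \<Rightarrow> nat list set" where
  "Qset m n = {lam \<in> partitions n. in_rankset m lam}"

definition Pneg :: "int \<Rightarrow> nat \<Rightarrow> nat list set" where
  "Pneg m n = {lam \<in> partitions n. rank lam \<ge> - m}"

definition conjugate :: "nat list \<Rightarrow> nat list" where
  "conjugate xs = map (\<lambda>i. length (filter (\<lambda>x. i \<le> x) xs)) [1..<Suc (foldr max xs 0)]"

definition durfee_j :: "nat \<Rightarrow> nat list \<Rightarrow> nat" where
  "durfee_j m lam = (GREATEST j. j \<le> part lam (m + j))"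

definition durfee_alpha :: "nat \<Rightarrow> nat list \<Rightarrow> nat list" where
  "durfee_alpha m lam = (let j = durfee_j m lam in
     conjugate (map (\<lambda>k. part lam k - j) [1..<Suc (m + j)]))"

definition durfee_beta :: "nat \<Rightarrow> nat list \<Rightarrow> nat list" where
  "durfee_beta m lam = drop (m + durfee_j m lam) lam"

definition Q5 :: "nat \<Rightarrow> nat \<Rightarrow> nat list set" where
  "Q5 m n = {lam \<in> Qset (int m) n.
     (let j = durfee_j m lam; a = durfee_alpha m lam; b = durfee_beta m lam in
        j \<ge> 1 \<and> int (length b) - int (length a) \<ge> 1 \<and>
        part a 1 = m + j \<and> part a 2 = m + j \<and> m + j > part a 3 \<and>
        spart b \<ge> 2)}"

definition P5 :: "nat \<Rightarrow> nat \<Rightarrow> nat list set" where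
  "P5 m n = {mu \<in> Pneg (int m) n.
     (let j' = durfee_j m mu; g = durfee_alpha m mu; d = durfee_beta m mu in
        j' \<ge> 1 \<and> length g = length d \<and>
        int (part g 1) \<le> int m + int j' - 3 \<and> part d 1 = j')}"

end

theory Submission
  imports Defs
begin

text \<open>
  Let \<open>\<lambda> \<in> Q\<^sub>5(m,n)\<close> have m-Durfee symbol \<open>(\<alpha>, \<beta>)\<close> with rectangle \<open>(m+j) \<times> j\<close>. Then
  \<open>\<alpha> = (m+j, m+j, a)\<close> by definition of \<open>Q\<^sub>5\<close>, and \<open>\<beta> = (j, b)\<close> because m lies in the rank
  set of \<open>\<lambda>\<close> exactly when \<open>\<lambda>\<^bsub>m+j+1\<^esub> = j\<close>; moreover \<open>j \<ge> 2\<close>, the parts of b lie in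
  \<open>[2, j]\<close> and \<open>\<ell>(b) \<ge> \<ell>(a) + 2\<close>. The image of \<open>\<lambda>\<close> is the partition with rectangle
  \<open>(m+j+1) \<times> (j+1)\<close> and symbol \<open>(\<gamma>, \<delta>)\<close>, where \<open>\<gamma>\<close> lists the parts of a exceeding j
  and the parts of b, each lowered by 1, followed by \<open>\<lfloor>(m-1)/2\<rfloor>\<close> ones, and \<open>\<delta>\<close> lists
  \<open>j+1\<close>, the parts of a that are at most j, each raised by 1, and \<open>(m-1) mod 2\<close> twos,
  padded with ones to the length of \<open>\<gamma>\<close>. The rectangle grows by \<open>m + 2j + 1\<close> cells,
  exactly what is removed from the symbol, and \<open>\<ell>(\<gamma>) = \<ell>(\<delta>)\<close> makes the rank equal
  to \<open>-m\<close>. The parts \<open>\<ge> j\<close> of \<open>\<gamma>\<close> and the parts \<open>\<ge> 2\<close> of the tail of \<open>\<delta>\<close> give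
  back the two halves of a, and the remaining parts of \<open>\<gamma>\<close> give back b, so the map
  is injective.
\<close>

lemma foldr_max_ge: "x \<in> set xs \<Longrightarrow> x \<le> foldr max xs (0::nat)"
  by (induction xs) (auto simp: le_max_iff_disj)

lemma foldr_max_le_iff: "foldr max xs (0::nat) \<le> B \<longleftrightarrow> (\<forall>x\<in>set xs. x \<le> B)"
  by (induction xs) auto

lemma foldr_max_eqI: "x \<in> set xs \<Longrightarrow> \<forall>y\<in>set xs. y \<le> x \<Longrightarrow> foldr max xs (0::nat) = x"
  using foldr_max_ge foldr_max_le_iff by (meson antisym)

lemma sorted_map_mono:
  assumes "mono (f :: 'a::order \<Rightarrow> 'b::order)" "sorted_wrt (\<ge>) xs"
  shows "sorted_wrt (\<ge>) (map f xs)"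
proof -
  have "sorted_wrt (\<lambda>x y. f y \<le> f x) xs"
    using assms(2) by (rule sorted_wrt_mono_rel[rotated]) (simp add: monoD[OF assms(1)])
  then show ?thesis by (simp add: sorted_wrt_map)
qed

lemma sorted_wrt_replicate: "R x x \<Longrightarrow> sorted_wrt R (replicate n x)"
  by (induction n) auto

lemma sum_list_map_Suc: "sum_list (map Suc xs) = sum_list xs + length xs"
  by (induction xs) auto

lemma sum_list_map_pred: "\<forall>x\<in>set xs. 0 < x \<Longrightarrow> sum_list (map (\<lambda>x. x - 1) xs) + length xs = sum_list xs"
  by (induction xs) auto

lemma map_pred_inject:
  assumes "\<forall>x\<in>set xs. 0 < x" "\<forall>y\<in>set ys. 0 < y" "map (\<lambda>x. x - 1) xs = map (\<lambda>x::nat. x - 1) ys"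
  shows "xs = ys"
proof -
  have "inj_on (\<lambda>x::nat. x - 1) (set xs \<union> set ys)"
    using assms(1,2) by (intro inj_on_diff_nat) auto
  with assms(3) show ?thesis by (simp add: inj_on_map_eq_map)
qed

lemma sum_list_filter_partition:
  "sum_list (filter (\<lambda>x. c < x) xs) + sum_list (filter (\<lambda>x. x \<le> c) xs) = sum_list (xs :: nat list)"
  by (induction xs) auto

lemma sorted_filter_partition:
  "sorted_wrt (\<ge>) xs \<Longrightarrow> filter (\<lambda>x. c < x) xs @ filter (\<lambda>x. x \<le> c) xs = (xs :: 'a::linorder list)"
proof (induction xs)
  case (Cons x xs)
  show ?case
  proof (cases "c < x")
    case False
    with Cons.prems have "\<forall>y\<in>set xs. y \<le> c" by auto
    then have "filter (\<lambda>y. c < y) xs = []" "filter (\<lambda>y. y \<le> c) xs = xs"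
      by (auto simp: filter_empty_conv)
    with False show ?thesis by simp
  qed (use Cons in simp)
qed simp

section \<open>Conjugation by counting parts\<close>

text \<open>Ranges are written \<open>[Suc 0..<Suc N]\<close>, the simp normal form of the \<open>[1..<Suc N]\<close>
  used in the definitions.\<close>

definition count_ge :: "nat \<Rightarrow> nat list \<Rightarrow> nat" where
  "count_ge k xs = length (filter (\<lambda>x. k \<le> x) xs)"

lemma count_ge_Cons: "count_ge k (x # xs) = (if k \<le> x then Suc (count_ge k xs) else count_ge k xs)"
  by (simp add: count_ge_def)

lemma count_ge_le_length: "count_ge k xs \<le> length xs"
  by (simp add: count_ge_def)

lemma count_ge_antimono: "k \<le> k' \<Longrightarrow> count_ge k' xs \<le> count_ge k xs"
  by (induction xs) (auto simp: count_ge_def)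

lemma less_count_ge_iff:
  assumes "sorted_wrt (\<ge>) xs"
  shows "i < count_ge k xs \<longleftrightarrow> i < length xs \<and> k \<le> xs ! i"
  using assms
proof (induction xs arbitrary: i)
  case (Cons x xs)
  show ?case
  proof (cases "k \<le> x")
    case True
    then show ?thesis using Cons by (cases i) (auto simp: count_ge_Cons)
  next
    case False
    with Cons.prems have "\<forall>y\<in>set xs. y < k" by auto
    then have "count_ge k xs = 0" by (auto simp: count_ge_def filter_empty_conv)
    moreover have "\<not> k \<le> (x # xs) ! i" if "i < length (x # xs)"
      using that False \<open>\<forall>y\<in>set xs. y < k\<close> by (cases i) (auto simp: all_set_conv_all_nth)
    ultimately show ?thesis using False by (auto simp: count_ge_Cons)
  qed
qed (simp add: count_ge_def)

lemma length_filter_le_upt: "length (filter (\<lambda>k. k \<le> v) [Suc 0..<Suc M]) = min v M"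
  by (induction M) auto

lemma length_filter_less_count_ge:
  assumes "sorted_wrt (\<ge>) xs"
  shows "length (filter (\<lambda>k. i < count_ge k xs) [Suc 0..<Suc M]) = (if i < length xs then min (xs ! i) M else 0)"
  using length_filter_le_upt[of "xs ! i" M] by (simp add: less_count_ge_iff[OF assms] del: upt_Suc)

lemma sum_list_of_bool_le_upt: "(\<Sum>k\<leftarrow>[Suc 0..<Suc N]. of_bool (k \<le> x)) = min x N"
  by (induction N) auto

lemma sum_list_count_ge:
  "\<forall>x\<in>set xs. x \<le> N \<Longrightarrow> (\<Sum>k\<leftarrow>[Suc 0..<Suc N]. count_ge k xs) = sum_list xs"
proof (induction xs)
  case (Cons x xs)
  have "(\<Sum>k\<leftarrow>[Suc 0..<Suc N]. count_ge k (x # xs))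
      = (\<Sum>k\<leftarrow>[Suc 0..<Suc N]. of_bool (k \<le> x)) + (\<Sum>k\<leftarrow>[Suc 0..<Suc N]. count_ge k xs)"
    by (simp add: count_ge_Cons sum_list_addf[symmetric] del: upt_Suc)
      (intro arg_cong[where f=sum_list] map_cong, auto)
  moreover have "(\<Sum>k\<leftarrow>[Suc 0..<Suc N]. of_bool (k \<le> x)) = x"
    using Cons.prems by (simp add: sum_list_of_bool_le_upt del: upt_Suc)
  ultimately show ?case using Cons by simp
qed (simp add: count_ge_def)

lemma sorted_map_count_ge: "sorted_wrt (\<ge>) (map (\<lambda>i. c + count_ge i xs) [a..<b])"
proof -
  have "sorted_wrt (\<lambda>i i'. count_ge i' xs \<le> count_ge i xs) [a..<b]"
    by (rule sorted_wrt_mono_rel[OF _ sorted_wrt_upt]) (simp add: count_ge_antimono)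
  then show ?thesis by (simp add: sorted_wrt_map)
qed

lemma conjugate_eq_map_count_ge:
  "conjugate xs = map (\<lambda>i. count_ge i xs) [Suc 0..<Suc (foldr max xs 0)]"
  by (simp add: conjugate_def count_ge_def)

lemma length_conjugate: "length (conjugate xs) = foldr max xs 0"
  by (simp add: conjugate_eq_map_count_ge)

lemma nth_conjugate: "i < length (conjugate xs) \<Longrightarrow> conjugate xs ! i = count_ge (Suc i) xs"
  by (simp add: conjugate_eq_map_count_ge length_conjugate del: upt_Suc)

lemma count_ge_Suc_map_count_ge:
  "count_ge (Suc i) (map (\<lambda>k. count_ge k xs) ks) = length (filter (\<lambda>k. i < count_ge k xs) ks)"
  by (simp add: count_ge_def[of "Suc i"] filter_map comp_def Suc_le_eq)

lemma count_ge_conjugate: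
  assumes "sorted_wrt (\<ge>) xs"
  shows "count_ge (Suc i) (conjugate xs) = (if i < length xs then xs ! i else 0)"
  using foldr_max_ge[of "xs ! i" xs]
  by (auto simp: conjugate_eq_map_count_ge count_ge_Suc_map_count_ge
      length_filter_less_count_ge[OF assms] min_def simp del: upt_Suc)

lemma conjugate_map_count_ge:
  assumes "sorted_wrt (\<ge>) xs" "\<forall>x\<in>set xs. 0 < x \<and> x \<le> N"
  shows "conjugate (map (\<lambda>k. count_ge k xs) [Suc 0..<Suc N]) = xs"
proof -
  let ?ys = "map (\<lambda>k. count_ge k xs) [Suc 0..<Suc N]"
  have "foldr max ?ys 0 = length xs"
  proof (cases "xs = []")
    case True
    then show ?thesis using foldr_max_le_iff[of ?ys 0] by (simp add: count_ge_def del: upt_Suc)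
  next
    case False
    with assms(2) have "1 \<le> N" by (cases xs) auto
    moreover have "count_ge 1 xs = length xs"
      using assms(2) by (simp add: count_ge_def Suc_le_eq)
    ultimately have "length xs \<in> set ?ys" by (auto simp del: upt_Suc intro: image_eqI[of _ _ 1])
    then show ?thesis by (rule foldr_max_eqI) (auto simp: count_ge_le_length)
  qed
  then have len: "length (conjugate ?ys) = length xs" by (simp add: length_conjugate)
  show ?thesis
  proof (rule nth_equalityI)
    fix i assume "i < length (conjugate ?ys)"
    with len assms(2) show "conjugate ?ys ! i = xs ! i"
      by (auto simp: nth_conjugate count_ge_Suc_map_count_ge length_filter_less_count_ge[OF assms(1)]
          min_def simp del: upt_Suc)
  qed (rule len)
qed

lemma sorted_conjugate: "sorted_wrt (\<ge>) (conjugate xs)"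
  using sorted_map_count_ge[of 0] by (simp add: conjugate_eq_map_count_ge del: upt_Suc)

lemma conjugate_le_length: "x \<in> set (conjugate xs) \<Longrightarrow> x \<le> length xs"
  by (auto simp: conjugate_eq_map_count_ge count_ge_le_length)

lemma conjugate_pos:
  assumes "x \<in> set (conjugate xs)"
  shows "0 < x"
proof -
  obtain k where k: "x = count_ge k xs" "1 \<le> k" "k \<le> foldr max xs 0"
    using assms by (auto simp: conjugate_eq_map_count_ge)
  then obtain y where "y \<in> set xs" "k \<le> y"
    using foldr_max_le_iff[of xs "k - 1"] by force
  then show ?thesis by (auto simp: k(1) count_ge_def filter_empty_conv)
qed

section \<open>The partition with a given Durfee symbol\<close>

lemma part_mono:
  assumes "sorted_wrt (\<ge>) lam" "1 \<le> k" "k \<le> k'"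
  shows "part lam k' \<le> part lam k"
proof (cases "k < k' \<and> k' \<le> length lam")
  case True
  then have "lam ! (k' - 1) \<le> lam ! (k - 1)"
    using assms(2) by (intro sorted_wrt_nth_less[OF assms(1)]) auto
  then show ?thesis using True assms(2) by (simp add: part_def)
qed (use assms in \<open>auto simp: part_def\<close>)

lemma part_le_bound: "\<forall>x\<in>set xs. x \<le> B \<Longrightarrow> part xs k \<le> B"
  by (auto simp: part_def)

lemma part_append:
  "part (xs @ ys) k = (if k \<le> length xs then part xs k else part ys (k - length xs))"
  by (auto simp: part_def nth_append)

lemma part_map_upt:
  "part (map f [Suc 0..<Suc N]) k = (if 1 \<le> k \<and> k \<le> N then f k else 0)"
  by (auto simp: part_def simp del: upt_Suc)

lemma sorted_le_part_1: "sorted_wrt (\<ge>) xs \<Longrightarrow> x \<in> set xs \<Longrightarrow> x \<le> part xs 1"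
  by (cases xs) (auto simp: part_def)

lemma le_part_add_imp_le_length: "j \<le> part lam (m + j) \<Longrightarrow> j \<le> length lam"
  by (cases "j = 0") (auto simp: part_def split: if_splits)

lemma durfee_j_le_part: "durfee_j m lam \<le> part lam (m + durfee_j m lam)"
  unfolding durfee_j_def
  by (rule GreatestI_nat[of _ 0 "length lam"]) (auto intro: le_part_add_imp_le_length)

lemma le_durfee_j: "j \<le> part lam (m + j) \<Longrightarrow> j \<le> durfee_j m lam"
  unfolding durfee_j_def
  by (rule Greatest_le_nat[of _ j "length lam"]) (auto intro: le_part_add_imp_le_length)

lemma part_after_durfee_rectangle: "part lam (m + durfee_j m lam + 1) \<le> durfee_j m lam"
  using le_durfee_j[of "Suc (durfee_j m lam)" lam m] by fastforce

lemma durfee_alpha_eq: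
  "durfee_alpha m lam
     = conjugate (map (\<lambda>k. part lam k - durfee_j m lam) [Suc 0..<Suc (m + durfee_j m lam)])"
  by (simp add: durfee_alpha_def Let_def del: upt_Suc)

text \<open>The first \<open>m + j\<close> parts are j plus the conjugate of a, padded with zeros.\<close>

definition of_durfee_symbol :: "nat \<Rightarrow> nat \<Rightarrow> nat list \<Rightarrow> nat list \<Rightarrow> nat list" where
  "of_durfee_symbol m j a b = map (\<lambda>i. j + count_ge i a) [Suc 0..<Suc (m + j)] @ b"

definition is_durfee_symbol :: "nat \<Rightarrow> nat \<Rightarrow> nat list \<Rightarrow> nat list \<Rightarrow> bool" where
  "is_durfee_symbol m j a b \<longleftrightarrow> 1 \<le> j \<and>
     sorted_wrt (\<ge>) a \<and> (\<forall>x\<in>set a. 0 < x \<and> x \<le> m + j) \<and>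
     sorted_wrt (\<ge>) b \<and> (\<forall>x\<in>set b. 0 < x \<and> x \<le> j)"

lemma length_of_durfee_symbol: "length (of_durfee_symbol m j a b) = m + j + length b"
  by (simp add: of_durfee_symbol_def del: upt_Suc)

lemma part_of_durfee_symbol:
  "part (of_durfee_symbol m j a b) k
     = (if k = 0 then 0 else if k \<le> m + j then j + count_ge k a else part b (k - (m + j)))"
  by (auto simp: of_durfee_symbol_def part_append part_map_upt simp del: upt_Suc)

lemma part_1_of_durfee_symbol:
  assumes "is_durfee_symbol m j a b"
  shows "part (of_durfee_symbol m j a b) 1 = j + length a"
  using assms by (auto simp: is_durfee_symbol_def part_of_durfee_symbol count_ge_def Suc_le_eq)

lemma is_partition_of_durfee_symbol:
  assumes "is_durfee_symbol m j a b"
  shows "is_partition (of_durfee_symbol m j a b)"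
proof -
  let ?top = "map (\<lambda>i. j + count_ge i a) [Suc 0..<Suc (m + j)]"
  have "\<forall>x\<in>set ?top. j \<le> x" by auto
  moreover have "\<forall>y\<in>set b. 0 < y \<and> y \<le> j" "sorted_wrt (\<ge>) b" "1 \<le> j"
    using assms by (auto simp: is_durfee_symbol_def)
  ultimately show ?thesis
    using sorted_map_count_ge[of j a]
    by (fastforce simp: is_partition_def of_durfee_symbol_def sorted_wrt_append simp del: upt_Suc)
qed

lemma sum_list_of_durfee_symbol:
  assumes "is_durfee_symbol m j a b"
  shows "sum_list (of_durfee_symbol m j a b) = j * (m + j) + sum_list a + sum_list b"
proof -
  have "\<forall>x\<in>set a. x \<le> m + j" using assms by (auto simp: is_durfee_symbol_def)
  then show ?thesis
    by (simp add: of_durfee_symbol_def sum_list_addf sum_list_count_ge sum_list_triv del: upt_Suc)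
qed

lemma durfee_j_of_durfee_symbol:
  assumes "is_durfee_symbol m j a b"
  shows "durfee_j m (of_durfee_symbol m j a b) = j"
proof (rule antisym)
  let ?lam = "of_durfee_symbol m j a b"
  have b_le: "\<forall>x\<in>set b. x \<le> j" and "1 \<le> j" using assms by (auto simp: is_durfee_symbol_def)
  then show "j \<le> durfee_j m ?lam"
    by (intro le_durfee_j) (simp add: part_of_durfee_symbol)
  show "durfee_j m ?lam \<le> j"
  proof (rule ccontr)
    assume "\<not> durfee_j m ?lam \<le> j"
    then have "part ?lam (m + durfee_j m ?lam) \<le> j"
      using part_le_bound[OF b_le] by (simp add: part_of_durfee_symbol)
    with \<open>\<not> durfee_j m ?lam \<le> j\<close> show False using durfee_j_le_part[of m ?lam] by simp
  qed
qed

lemma durfee_alpha_of_durfee_symbol: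
  assumes "is_durfee_symbol m j a b"
  shows "durfee_alpha m (of_durfee_symbol m j a b) = a"
proof -
  have "map (\<lambda>k. part (of_durfee_symbol m j a b) k - j) [Suc 0..<Suc (m + j)]
      = map (\<lambda>k. count_ge k a) [Suc 0..<Suc (m + j)]"
    by (simp add: part_of_durfee_symbol del: upt_Suc)
  moreover have "conjugate (map (\<lambda>k. count_ge k a) [Suc 0..<Suc (m + j)]) = a"
    using assms by (intro conjugate_map_count_ge) (auto simp: is_durfee_symbol_def)
  ultimately show ?thesis
    by (simp only: durfee_alpha_eq durfee_j_of_durfee_symbol[OF assms])
qed

lemma durfee_beta_of_durfee_symbol:
  "is_durfee_symbol m j a b \<Longrightarrow> durfee_beta m (of_durfee_symbol m j a b) = b"
  unfolding durfee_beta_def by (simp add: durfee_j_of_durfee_symbol) (simp add: of_durfee_symbol_def del: upt_Suc)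

lemma of_durfee_symbol_inject:
  assumes "is_durfee_symbol m j a b" "is_durfee_symbol m j' a' b'"
    and eq: "of_durfee_symbol m j a b = of_durfee_symbol m j' a' b'"
  shows "j = j' \<and> a = a' \<and> b = b'"
proof (intro conjI)
  from eq have "durfee_j m (of_durfee_symbol m j a b) = durfee_j m (of_durfee_symbol m j' a' b')"
    by (rule arg_cong)
  then show "j = j'" unfolding durfee_j_of_durfee_symbol[OF assms(1)] durfee_j_of_durfee_symbol[OF assms(2)] .
  from eq have "durfee_alpha m (of_durfee_symbol m j a b) = durfee_alpha m (of_durfee_symbol m j' a' b')"
    by (rule arg_cong)
  then show "a = a'"
    unfolding durfee_alpha_of_durfee_symbol[OF assms(1)] durfee_alpha_of_durfee_symbol[OF assms(2)] .
  from eq have "durfee_beta m (of_durfee_symbol m j a b) = durfee_beta m (of_durfee_symbol m j' a' b')"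
    by (rule arg_cong)
  then show "b = b'"
    unfolding durfee_beta_of_durfee_symbol[OF assms(1)] durfee_beta_of_durfee_symbol[OF assms(2)] .
qed

lemma sorted_map_part_diff:
  assumes "sorted_wrt (\<ge>) lam"
  shows "sorted_wrt (\<ge>) (map (\<lambda>k. part lam k - j) [Suc 0..<Suc N])"
proof -
  have "part lam k' - j \<le> part lam k - j" if "1 \<le> k" "k \<le> k'" for k k'
    using part_mono[OF assms that] by (rule diff_le_mono)
  then have "sorted_wrt (\<lambda>k k'. part lam k' - j \<le> part lam k - j) [Suc 0..<Suc N]"
    by (intro sorted_wrt_mono_rel[OF _ sorted_wrt_upt]) auto
  then show ?thesis by (simp add: sorted_wrt_map del: upt_Suc)
qed

lemma is_durfee_symbol_durfee:
  assumes "is_partition lam" "1 \<le> durfee_j m lam"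
  shows "is_durfee_symbol m (durfee_j m lam) (durfee_alpha m lam) (durfee_beta m lam)"
proof -
  define j where "j = durfee_j m lam"
  define xs where "xs = map (\<lambda>k. part lam k - j) [Suc 0..<Suc (m + j)]"
  have sorted: "sorted_wrt (\<ge>) lam" and pos: "\<forall>x\<in>set lam. 0 < x"
    using assms(1) by (auto simp: is_partition_def)
  have alpha: "durfee_alpha m lam = conjugate xs"
    by (simp add: durfee_alpha_eq xs_def j_def del: upt_Suc)
  have "length xs = m + j" by (simp add: xs_def del: upt_Suc)
  then have alpha_ok: "\<forall>x\<in>set (durfee_alpha m lam). 0 < x \<and> x \<le> m + j"
    using conjugate_pos conjugate_le_length by (metis alpha)
  have beta_le: "x \<le> j" if "x \<in> set (durfee_beta m lam)" for x
  proof -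
    have "x \<in> set (drop (m + j) lam)" using that by (simp add: durfee_beta_def j_def)
    then obtain i where "i < length (drop (m + j) lam)" "x = drop (m + j) lam ! i"
      by (metis in_set_conv_nth)
    then have "x = part lam (m + j + i + 1)" by (auto simp: part_def)
    also have "\<dots> \<le> part lam (m + j + 1)" by (intro part_mono[OF sorted]) auto
    also have "\<dots> \<le> j" unfolding j_def by (rule part_after_durfee_rectangle)
    finally show ?thesis .
  qed
  show ?thesis
    unfolding is_durfee_symbol_def j_def[symmetric]
    using assms(2) alpha_ok beta_le sorted_conjugate alpha sorted pos
    by (auto simp: j_def durfee_beta_def sorted_wrt_drop dest: in_set_dropD)
qed

lemma of_durfee_symbol_durfee:
  assumes "is_partition lam" "1 \<le> durfee_j m lam"
  shows "of_durfee_symbol m (durfee_j m lam) (durfee_alpha m lam) (durfee_beta m lam) = lam"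
proof -
  define j where "j = durfee_j m lam"
  define xs where "xs = map (\<lambda>k. part lam k - j) [Suc 0..<Suc (m + j)]"
  have sorted: "sorted_wrt (\<ge>) lam" using assms(1) by (simp add: is_partition_def)
  have j_le: "j \<le> part lam (m + j)" unfolding j_def by (rule durfee_j_le_part)
  with assms(2) have len: "m + j \<le> length lam" by (auto simp: j_def part_def split: if_splits)
  have alpha: "durfee_alpha m lam = conjugate xs"
    by (simp add: durfee_alpha_eq xs_def j_def del: upt_Suc)
  have "map (\<lambda>i. j + count_ge i (conjugate xs)) [Suc 0..<Suc (m + j)] = take (m + j) lam"
  proof (rule nth_equalityI)
    fix i assume "i < length (map (\<lambda>i. j + count_ge i (conjugate xs)) [Suc 0..<Suc (m + j)])"
    then have i: "i < m + j" by (simp del: upt_Suc)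
    have "j \<le> part lam (Suc i)" using j_le part_mono[OF sorted, of "Suc i" "m + j"] i by simp
    moreover have "count_ge (Suc i) (conjugate xs) = part lam (Suc i) - j"
      using i by (simp add: count_ge_conjugate sorted_map_part_diff[OF sorted] xs_def del: upt_Suc)
    ultimately show "map (\<lambda>i. j + count_ge i (conjugate xs)) [Suc 0..<Suc (m + j)] ! i = take (m + j) lam ! i"
      using i len by (simp add: part_def del: upt_Suc)
  qed (use len in \<open>simp del: upt_Suc\<close>)
  then show ?thesis
    by (simp add: of_durfee_symbol_def alpha durfee_beta_def j_def[symmetric] del: upt_Suc)
qed

section \<open>The symbol of a partition in \<open>Q\<^sub>5\<close>\<close>

lemma in_rankset_iff_part_after_durfee_rectangle:
  assumes "is_partition lam"
  shows "in_rankset (int m) lam \<longleftrightarrow> part lam (m + durfee_j m lam + 1) = durfee_j m lam"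
proof
  define j where "j = durfee_j m lam"
  have sorted: "sorted_wrt (\<ge>) lam" using assms by (simp add: is_partition_def)
  assume "in_rankset (int m) lam"
  then obtain k where "1 \<le> k" "int k - 1 - int (part lam k) = int m"
    unfolding in_rankset_def by blast
  then have k: "1 \<le> k" "k = m + 1 + part lam k" by linarith+
  have "m + j < k"
  proof (rule ccontr)
    assume "\<not> m + j < k"
    then have "part lam (m + j) \<le> part lam k" using part_mono[OF sorted k(1)] by simp
    moreover have "j \<le> part lam (m + j)" unfolding j_def by (rule durfee_j_le_part)
    ultimately show False using k(2) \<open>\<not> m + j < k\<close> by linarith
  qed
  then have "part lam k \<le> part lam (m + j + 1)" by (intro part_mono[OF sorted]) auto
  also have "\<dots> \<le> j" unfolding j_def by (rule part_after_durfee_rectangle)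
  finally have "part lam k \<le> j" .
  with k(2) \<open>m + j < k\<close> have "k = m + j + 1" by linarith
  with k(2) show "part lam (m + j + 1) = j" by simp
next
  assume "part lam (m + durfee_j m lam + 1) = durfee_j m lam"
  then show "in_rankset (int m) lam"
    unfolding in_rankset_def by (intro exI[of _ "m + durfee_j m lam + 1"]) auto
qed

lemma enat_le_spart_iff: "enat k \<le> spart xs \<longleftrightarrow> (\<forall>x\<in>set xs. k \<le> x)"
  by (simp add: spart_def Min_ge_iff)

definition Q5_data :: "nat \<Rightarrow> nat \<Rightarrow> nat list \<Rightarrow> nat list \<Rightarrow> bool" where
  "Q5_data m j a b \<longleftrightarrow> 1 \<le> m \<and> 2 \<le> j \<and> length a + 2 \<le> length b \<and>
     sorted_wrt (\<ge>) a \<and> (\<forall>x\<in>set a. 0 < x \<and> x < m + j) \<and>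
     sorted_wrt (\<ge>) b \<and> (\<forall>x\<in>set b. 2 \<le> x \<and> x \<le> j)"

lemma is_durfee_symbol_Q5_data:
  "Q5_data m j a b \<Longrightarrow> is_durfee_symbol m j ((m + j) # (m + j) # a) (j # b)"
  by (fastforce simp: Q5_data_def is_durfee_symbol_def)

lemma Q5_decomposition:
  assumes "lam \<in> Q5 m n" "1 \<le> m"
  obtains j a b where "Q5_data m j a b" "lam = of_durfee_symbol m j ((m + j) # (m + j) # a) (j # b)"
proof -
  define j where "j = durfee_j m lam"
  define \<alpha> where "\<alpha> = durfee_alpha m lam"
  define \<beta> where "\<beta> = durfee_beta m lam"
  have lam: "is_partition lam" "in_rankset (int m) lam"
    using assms(1) by (auto simp: Q5_def Qset_def partitions_def)
  have j: "1 \<le> j" and len: "length \<alpha> + 1 \<le> length \<beta>"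
    and \<alpha>12: "part \<alpha> 1 = m + j" "part \<alpha> 2 = m + j" and \<alpha>3: "part \<alpha> 3 < m + j"
    and \<beta>2: "enat 2 \<le> spart \<beta>"
    using assms(1) by (auto simp: Q5_def Let_def j_def \<alpha>_def \<beta>_def numeral_eq_enat)
  have sym: "is_durfee_symbol m j \<alpha> \<beta>"
    unfolding j_def \<alpha>_def \<beta>_def by (rule is_durfee_symbol_durfee[OF lam(1) j[unfolded j_def]])
  have lam_eq: "lam = of_durfee_symbol m j \<alpha> \<beta>"
    unfolding j_def \<alpha>_def \<beta>_def by (rule of_durfee_symbol_durfee[OF lam(1) j[unfolded j_def], symmetric])
  obtain a where \<alpha>_eq: "\<alpha> = (m + j) # (m + j) # a"
    using \<alpha>12 assms(2) by (cases \<alpha> rule: remdups_adj.cases) (auto simp: part_def)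
  have "part lam (m + j + 1) = j"
    using lam by (simp add: j_def in_rankset_iff_part_after_durfee_rectangle)
  with j have "m + j < length lam" "lam ! (m + j) = j" by (auto simp: part_def split: if_splits)
  then obtain b where \<beta>_eq: "\<beta> = j # b"
    by (metis \<beta>_def durfee_beta_def j_def Cons_nth_drop_Suc)
  have "part a 1 < m + j" using \<alpha>3 j by (simp add: \<alpha>_eq part_def numeral_3_eq_3 split: if_splits)
  then have "Q5_data m j a b"
    using sym len \<beta>2 assms(2) j sorted_le_part_1[of a]
    unfolding Q5_data_def is_durfee_symbol_def enat_le_spart_iff \<alpha>_eq \<beta>_eq
    by fastforce
  then show thesis using that lam_eq \<alpha>_eq \<beta>_eq by simp
qed

section \<open>The injection\<close>

definition phi_gamma :: "nat \<Rightarrow> nat \<Rightarrow> nat list \<Rightarrow> nat list \<Rightarrow> nat list" where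
  "phi_gamma m j a b = map (\<lambda>x. x - 1) (filter (\<lambda>x. j < x) a) @ map (\<lambda>x. x - 1) b @
     replicate ((m - 1) div 2) 1"

definition phi_delta :: "nat \<Rightarrow> nat \<Rightarrow> nat list \<Rightarrow> nat list \<Rightarrow> nat list" where
  "phi_delta m j a b = Suc j # map Suc (filter (\<lambda>x. x \<le> j) a) @ replicate ((m - 1) mod 2) 2 @
     replicate (length (phi_gamma m j a b) - (1 + length (filter (\<lambda>x. x \<le> j) a) + (m - 1) mod 2)) 1"

lemma length_phi_gamma:
  "length (phi_gamma m j a b) = length (filter (\<lambda>x. j < x) a) + length b + (m - 1) div 2"
  by (simp add: phi_gamma_def)

lemma part_1_phi_delta: "part (phi_delta m j a b) 1 = Suc j"
  by (simp add: phi_delta_def part_def)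

context
  fixes m j :: nat and a b :: "nat list"
  assumes data: "Q5_data m j a b"
begin

lemma length_phi_delta_head:
  "1 + length (filter (\<lambda>x. x \<le> j) a) + (m - 1) mod 2 \<le> length (phi_gamma m j a b)"
proof -
  have "length (filter (\<lambda>x. x \<le> j) a) \<le> length a" by (rule length_filter_le)
  moreover have "length a + 2 \<le> length b" using data by (simp add: Q5_data_def)
  moreover have "(m - 1) mod 2 \<le> 1" by simp
  ultimately show ?thesis unfolding length_phi_gamma by linarith
qed

lemma length_phi_delta: "length (phi_delta m j a b) = length (phi_gamma m j a b)"
  using length_phi_delta_head by (simp add: phi_delta_def)

lemma phi_gamma_bound:
  assumes "x \<in> set (phi_gamma m j a b)"
  shows "0 < x \<and> x + 2 \<le> m + j"
proof -
  have m: "1 \<le> m" and j: "2 \<le> j" and a: "\<forall>y\<in>set a. y < m + j"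
    and b: "\<forall>y\<in>set b. 2 \<le> y \<and> y \<le> j"
    using data by (auto simp: Q5_data_def)
  from assms consider (big_part) y where "y \<in> set a" "j < y" "x = y - 1"
    | (rest_part) y where "y \<in> set b" "x = y - 1" | (one) "x = 1"
    by (auto simp: phi_gamma_def split: if_splits)
  then show ?thesis
  proof cases
    case (big_part y)
    with a have "y < m + j" by blast
    with big_part j show ?thesis by linarith
  next
    case (rest_part y)
    with b have "2 \<le> y" "y \<le> j" by auto
    with rest_part m show ?thesis by linarith
  qed (use m j in linarith)
qed

lemma phi_gamma_not_Nil: "phi_gamma m j a b \<noteq> []"
  using data by (cases b) (auto simp: phi_gamma_def Q5_data_def)

lemma sorted_phi_gamma: "sorted_wrt (\<ge>) (phi_gamma m j a b)"
proof -
  have a: "sorted_wrt (\<ge>) a" and b: "sorted_wrt (\<ge>) b" "\<forall>x\<in>set b. 2 \<le> x \<and> x \<le> j"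
    and j: "2 \<le> j"
    using data by (auto simp: Q5_data_def)
  have mono_pred: "mono (\<lambda>x::nat. x - 1)" by (rule monoI) simp
  have "sorted_wrt (\<ge>) (map (\<lambda>x. x - 1) (filter (\<lambda>x. j < x) a))"
    using a by (intro sorted_map_mono[OF mono_pred]) (simp add: sorted_wrt_filter)
  moreover have "sorted_wrt (\<ge>) (map (\<lambda>x. x - 1) b @ replicate ((m - 1) div 2) 1)"
    using b sorted_map_mono[OF mono_pred b(1)]
    by (auto simp: sorted_wrt_append sorted_wrt_replicate)
  moreover have "y \<le> x - 1" if "x \<in> set a" "j < x" "y \<in> set (map (\<lambda>x. x - 1) b @ replicate ((m - 1) div 2) 1)" for x y
    using that b(2) j by (auto split: if_splits)
  ultimately show ?thesis by (auto simp: phi_gamma_def sorted_wrt_append)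
qed

lemma sorted_phi_delta: "sorted_wrt (\<ge>) (phi_delta m j a b)"
proof -
  let ?F' = "filter (\<lambda>x. x \<le> j) a"
  let ?ones = "replicate ((m - 1) mod 2) 2 @
    replicate (length (phi_gamma m j a b) - (1 + length ?F' + (m - 1) mod 2)) (1::nat)"
  have "sorted_wrt (\<ge>) a" and pos: "\<forall>x\<in>set a. 0 < x" and "2 \<le> j"
    using data by (auto simp: Q5_data_def)
  then have "sorted_wrt (\<ge>) (map Suc ?F')"
    by (intro sorted_map_mono[OF mono_Suc]) (simp add: sorted_wrt_filter)
  moreover have "sorted_wrt (\<ge>) ?ones" by (simp add: sorted_wrt_append sorted_wrt_replicate)
  moreover have "\<forall>x\<in>set (map Suc ?F'). \<forall>y\<in>set ?ones. y \<le> x" using pos by auto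
  ultimately have "sorted_wrt (\<ge>) (map Suc ?F' @ ?ones)"
    by (simp only: sorted_wrt_append[of _ "map Suc ?F'"])
  moreover have "\<forall>y\<in>set (map Suc ?F' @ ?ones). y \<le> Suc j" using \<open>2 \<le> j\<close> by auto
  ultimately show ?thesis unfolding phi_delta_def by (simp only: sorted_wrt.simps)
qed

lemma is_durfee_symbol_phi: "is_durfee_symbol m (Suc j) (phi_gamma m j a b) (phi_delta m j a b)"
proof -
  have "\<forall>x\<in>set (phi_gamma m j a b). 0 < x \<and> x \<le> m + Suc j"
    using phi_gamma_bound by fastforce
  moreover have "\<forall>x\<in>set (phi_delta m j a b). 0 < x \<and> x \<le> Suc j"
    using data by (auto simp: phi_delta_def Q5_data_def)
  ultimately show ?thesis
    using sorted_phi_gamma sorted_phi_delta by (simp add: is_durfee_symbol_def)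
qed

lemma sum_list_phi:
  "sum_list (phi_gamma m j a b) + sum_list (phi_delta m j a b) = sum_list a + sum_list b + (m - 1) + j"
proof -
  let ?F = "filter (\<lambda>x. j < x) a" and ?F' = "filter (\<lambda>x. x \<le> j) a"
  let ?g = "(m - 1) div 2" and ?t = "(m - 1) mod 2"
  define K where "K = length (phi_gamma m j a b) - (1 + length ?F' + ?t)"
  have K: "length (phi_gamma m j a b) = 1 + length ?F' + ?t + K"
    using length_phi_delta_head by (simp add: K_def)
  have delta: "phi_delta m j a b = Suc j # map Suc ?F' @ replicate ?t 2 @ replicate K 1"
    by (simp add: phi_delta_def K_def)
  have pos: "\<forall>x\<in>set ?F. 0 < x" "\<forall>x\<in>set b. 0 < x" using data by (auto simp: Q5_data_def)
  have "sum_list (phi_gamma m j a b) + length ?F + length b = sum_list ?F + sum_list b + ?g"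
    using sum_list_map_pred[OF pos(1)] sum_list_map_pred[OF pos(2)]
    by (simp add: phi_gamma_def sum_list_replicate)
  moreover have "sum_list (phi_delta m j a b) = Suc j + sum_list ?F' + length ?F' + 2 * ?t + K"
    by (simp add: delta sum_list_replicate sum_list_map_Suc)
  moreover have "m - 1 = 2 * ?g + ?t" by simp
  ultimately show ?thesis
    using sum_list_filter_partition[of j a] K length_phi_gamma[of m j a b] by linarith
qed

lemma filter_ge_phi_gamma:
  "filter (\<lambda>x. j \<le> x) (phi_gamma m j a b) = map (\<lambda>x. x - 1) (filter (\<lambda>x. j < x) a)"
proof -
  have "2 \<le> j" and b: "\<forall>x\<in>set b. 2 \<le> x \<and> x \<le> j" using data by (auto simp: Q5_data_def)
  have "filter (\<lambda>x. j \<le> x) (map (\<lambda>x. x - 1) (filter (\<lambda>x. j < x) a))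
      = map (\<lambda>x. x - 1) (filter (\<lambda>x. j < x) a)"
    by (rule filter_True) auto
  moreover have "filter (\<lambda>x. j \<le> x) (map (\<lambda>x. x - 1) b) = []"
    using b by (auto simp: filter_empty_conv)
  moreover have "filter (\<lambda>x. j \<le> x) (replicate ((m - 1) div 2) (1::nat)) = []"
    using \<open>2 \<le> j\<close> by (auto simp: filter_empty_conv)
  ultimately show ?thesis by (simp add: phi_gamma_def)
qed

lemma filter_ge_2_tl_phi_delta:
  "filter (\<lambda>x. 2 \<le> x) (tl (phi_delta m j a b))
     = map Suc (filter (\<lambda>x. x \<le> j) a) @ replicate ((m - 1) mod 2) 2"
proof -
  have "\<forall>x\<in>set a. 0 < x" using data by (simp add: Q5_data_def)
  then have "filter (\<lambda>x. 2 \<le> x) (map Suc (filter (\<lambda>x. x \<le> j) a)) = map Suc (filter (\<lambda>x. x \<le> j) a)"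
    by (intro filter_True) auto
  moreover have "filter (\<lambda>x. 2 \<le> x) (replicate k (1::nat)) = []" for k
    by (auto simp: filter_empty_conv)
  moreover have "filter (\<lambda>x. 2 \<le> x) (replicate k (2::nat)) = replicate k 2" for k
    by (intro filter_True) auto
  ultimately show ?thesis by (simp add: phi_delta_def)
qed

end

lemma phi_inject:
  assumes data: "Q5_data m j a b" "Q5_data m j a' b'"
    and gamma: "phi_gamma m j a b = phi_gamma m j a' b'"
    and delta: "phi_delta m j a b = phi_delta m j a' b'"
  shows "a = a' \<and> b = b'"
proof -
  have "map (\<lambda>x. x - 1) (filter (\<lambda>x. j < x) a) = filter (\<lambda>x. j \<le> x) (phi_gamma m j a b)"
    by (rule filter_ge_phi_gamma[OF data(1), symmetric])
  also have "\<dots> = map (\<lambda>x. x - 1) (filter (\<lambda>x. j < x) a')"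
    unfolding gamma by (rule filter_ge_phi_gamma[OF data(2)])
  finally have F: "filter (\<lambda>x. j < x) a = filter (\<lambda>x. j < x) a'"
    by (rule map_pred_inject[rotated 2]) auto
  have "map Suc (filter (\<lambda>x. x \<le> j) a) @ replicate ((m - 1) mod 2) 2
      = map Suc (filter (\<lambda>x. x \<le> j) a') @ replicate ((m - 1) mod 2) 2"
    using filter_ge_2_tl_phi_delta[OF data(1)] filter_ge_2_tl_phi_delta[OF data(2)]
    unfolding delta by simp
  then have F': "filter (\<lambda>x. x \<le> j) a = filter (\<lambda>x. x \<le> j) a'"
    by (simp add: inj_map_eq_map)
  have "sorted_wrt (\<ge>) a" "sorted_wrt (\<ge>) a'" using data by (simp_all add: Q5_data_def)
  then have "a = a'"
    using sorted_filter_partition[of a j] sorted_filter_partition[of a' j] unfolding F F' by simp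
  moreover have "map (\<lambda>x. x - 1) b = map (\<lambda>x. x - 1) b'"
    using gamma unfolding phi_gamma_def F by simp
  then have "b = b'"
    by (rule map_pred_inject[rotated 2]) (use data in \<open>auto simp: Q5_data_def\<close>)
  ultimately show ?thesis by simp
qed

lemma of_durfee_symbol_phi_in_P5:
  assumes data: "Q5_data m j a b"
    and sum: "sum_list (of_durfee_symbol m j ((m + j) # (m + j) # a) (j # b)) = n"
  shows "of_durfee_symbol m (Suc j) (phi_gamma m j a b) (phi_delta m j a b) \<in> P5 m n"
proof -
  let ?\<gamma> = "phi_gamma m j a b" and ?\<delta> = "phi_delta m j a b"
  let ?\<mu> = "of_durfee_symbol m (Suc j) ?\<gamma> ?\<delta>"
  have sym: "is_durfee_symbol m (Suc j) ?\<gamma> ?\<delta>" by (rule is_durfee_symbol_phi[OF data])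
  have "1 \<le> m" using data by (simp add: Q5_data_def)
  moreover have "Suc j * (m + Suc j) = j * (m + j) + m + 2 * j + 1" by (simp add: algebra_simps)
  ultimately have "sum_list ?\<mu> = n"
    using sum sum_list_phi[OF data] sum_list_of_durfee_symbol[OF sym]
      sum_list_of_durfee_symbol[OF is_durfee_symbol_Q5_data[OF data]]
    by simp
  moreover have "rank ?\<mu> = - int m"
    using part_1_of_durfee_symbol[OF sym] length_of_durfee_symbol length_phi_delta[OF data]
    by (simp add: rank_def)
  moreover have "int (part ?\<gamma> 1) \<le> int m + int (Suc j) - 3"
    using phi_gamma_bound[OF data, of "hd ?\<gamma>"] phi_gamma_not_Nil[OF data]
    by (cases ?\<gamma>) (auto simp: part_def)
  ultimately show ?thesis
    using is_partition_of_durfee_symbol[OF sym] durfee_j_of_durfee_symbol[OF sym]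
      durfee_alpha_of_durfee_symbol[OF sym] durfee_beta_of_durfee_symbol[OF sym]
      length_phi_delta[OF data] part_1_phi_delta
    by (simp add: P5_def Pneg_def partitions_def)
qed

definition phi :: "nat \<Rightarrow> nat list \<Rightarrow> nat list" where
  "phi m lam = (let j = durfee_j m lam; a = drop 2 (durfee_alpha m lam); b = tl (durfee_beta m lam)
     in of_durfee_symbol m (Suc j) (phi_gamma m j a b) (phi_delta m j a b))"

lemma phi_of_durfee_symbol:
  assumes "Q5_data m j a b"
  shows "phi m (of_durfee_symbol m j ((m + j) # (m + j) # a) (j # b))
    = of_durfee_symbol m (Suc j) (phi_gamma m j a b) (phi_delta m j a b)"
  using is_durfee_symbol_Q5_data[OF assms]
  by (simp add: phi_def durfee_j_of_durfee_symbol durfee_alpha_of_durfee_symbol durfee_beta_of_durfee_symbol)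

lemma phi_image_Q5_subset_P5:
  assumes "1 \<le> m"
  shows "phi m ` Q5 m n \<subseteq> P5 m n"
proof
  fix \<mu> assume "\<mu> \<in> phi m ` Q5 m n"
  then obtain lam where lam: "lam \<in> Q5 m n" "\<mu> = phi m lam" by blast
  then obtain j a b where data: "Q5_data m j a b"
    and lam_eq: "lam = of_durfee_symbol m j ((m + j) # (m + j) # a) (j # b)"
    using Q5_decomposition[OF _ assms] by blast
  have "sum_list lam = n" using lam(1) by (simp add: Q5_def Qset_def partitions_def)
  then show "\<mu> \<in> P5 m n"
    using of_durfee_symbol_phi_in_P5[OF data] phi_of_durfee_symbol[OF data] lam(2) lam_eq by simp
qed

lemma inj_on_phi_Q5:
  assumes "1 \<le> m"
  shows "inj_on (phi m) (Q5 m n)"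
proof (rule inj_onI)
  fix lam lam' assume "lam \<in> Q5 m n" "lam' \<in> Q5 m n" and phi_eq: "phi m lam = phi m lam'"
  obtain j a b where data: "Q5_data m j a b"
    and lam: "lam = of_durfee_symbol m j ((m + j) # (m + j) # a) (j # b)"
    using Q5_decomposition[OF \<open>lam \<in> Q5 m n\<close> assms] by blast
  obtain j' a' b' where data': "Q5_data m j' a' b'"
    and lam': "lam' = of_durfee_symbol m j' ((m + j') # (m + j') # a') (j' # b')"
    using Q5_decomposition[OF \<open>lam' \<in> Q5 m n\<close> assms] by blast
  have "of_durfee_symbol m (Suc j) (phi_gamma m j a b) (phi_delta m j a b)
      = of_durfee_symbol m (Suc j') (phi_gamma m j' a' b') (phi_delta m j' a' b')"
    using phi_eq by (simp add: lam lam' phi_of_durfee_symbol[OF data] phi_of_durfee_symbol[OF data'])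
  then have "j = j'" "phi_gamma m j a b = phi_gamma m j a' b'" "phi_delta m j a b = phi_delta m j a' b'"
    using of_durfee_symbol_inject[OF is_durfee_symbol_phi[OF data] is_durfee_symbol_phi[OF data']]
    by auto
  with data data' have "a = a'" "b = b'" using phi_inject by blast+
  with \<open>j = j'\<close> show "lam = lam'" by (simp add: lam lam')
qed

theorem lemma4p6:
  fixes m n :: nat
  assumes "m \<ge> 1" and "n \<ge> 1"
  shows "\<exists>f. inj_on f (Q5 m n) \<and> f ` (Q5 m n) \<subseteq> P5 m n"
proof (intro exI conjI)
  show "inj_on (phi m) (Q5 m n)" by (rule inj_on_phi_Q5[OF assms(1)])
  show "phi m ` Q5 m n \<subseteq> P5 m n" by (rule phi_image_Q5_subset_P5[OF assms(1)])
qed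

end
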